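(* The set $X^{\mathcal B}=\{x^{\mathbf b}:\mathbf b\in\mathcal B\}$ is a basis of the $\mathbb C(\lambda)$-vector space $S'\big/\sum_{i=1}^n\big(x_i\frac{\partial f_\lambda}{\partial x_i}\big)S'$.
   Context: Let $A=\{\mathbf a_1,\dots,\mathbf a_m\}\subseteq\mathbb Z^n$ be linearly independent over $\mathbb R$, $\mathbf a_0\in\mathbb Z^n$, and $\ell_0,\dots,\ell_m$ positive integers with gcd $1$, $\ell_0\mathbf a_0=\sum_{j=1}^m\ell_j\mathbf a_j$, $\ell_0=\sum_{j=1}^m\ell_j$. Let $f_\lambda=\sum_{j=1}^m\ell_jx^{\mathbf a_j}-\ell_0\lambda x^{\mathbf a_0}$. Let $V$ be the real span of $A$, $V_{\mathbb Z}=V\cap\mathbb Z^n$, $C(A)$ the real cone generated by $A$, $M=V_{\mathbb Z}\cap C(A)$. Let $S'$ be the $\mathbb C(\lambda)$-subalgebra of $\mathbb C(\lambda)[x_1^{\pm1},\dots,x_n^{\pm1}]$ spanned by $\{x^u:u\in M\}$. Let $P(A)=\{\sum_jc_j\mathbf a_j:0\le c_j<1\}$ and $\mathcal B=V_{\mathbb Z}\cap P(A)$. *)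

theory Defs
  imports "HOL-Analysis.Analysis" "HOL-Library.Poly_Mapping"
    "HOL-Computational_Algebra.Polynomial" "HOL-Computational_Algebra.Fraction_Field"
begin

type_synonym ratfun = "complex poly fract"

definition lam :: ratfun where "lam = Fract [:0, 1:] 1"

text \<open>Laurent polynomials in x_1..x_n over C(lambda): finitely supported functions
  from exponent vectors in Z^n to coefficients; multiplication is convolution.\<close>
type_synonym 'n laurent = "(int ^ 'n) \<Rightarrow>\<^sub>0 ratfun"

definition xmon :: "int ^ ('n::finite) \<Rightarrow> 'n laurent" where
  "xmon u = Poly_Mapping.single u 1"

text \<open>The operator x_i d/dx_i on Laurent polynomials: x^u maps to u_i x^u.\<close>
definition euler_op :: "'n::finite \<Rightarrow> 'n laurent \<Rightarrow> 'n laurent" where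
  "euler_op i p = Poly_Mapping.mapp (\<lambda>u c. of_int (u $ i) * c) p"

definition rv :: "int ^ ('n::finite) \<Rightarrow> real ^ 'n" where
  "rv u = (\<chi> i. real_of_int (u $ i))"

definition f_lambda :: "nat \<Rightarrow> (nat \<Rightarrow> int ^ ('n::finite)) \<Rightarrow> int ^ 'n \<Rightarrow> (nat \<Rightarrow> nat) \<Rightarrow> 'n laurent" where
  "f_lambda m a a0 l =
     (\<Sum>j\<in>{1..m}. Poly_Mapping.single (a j) (of_nat (l j)))
     - Poly_Mapping.single a0 (of_nat (l 0) * lam)"

definition VZ :: "nat \<Rightarrow> (nat \<Rightarrow> int ^ ('n::finite)) \<Rightarrow> (int ^ 'n) set" where
  "VZ m a = {u. rv u \<in> span (rv ` a ` {1..m})}"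

definition coneA :: "nat \<Rightarrow> (nat \<Rightarrow> int ^ ('n::finite)) \<Rightarrow> (real ^ 'n) set" where
  "coneA m a = {v. \<exists>c::nat \<Rightarrow> real. (\<forall>j\<in>{1..m}. 0 \<le> c j) \<and> v = (\<Sum>j\<in>{1..m}. c j *\<^sub>R rv (a j))}"

definition parA :: "nat \<Rightarrow> (nat \<Rightarrow> int ^ ('n::finite)) \<Rightarrow> (real ^ 'n) set" where
  "parA m a = {v. \<exists>c::nat \<Rightarrow> real. (\<forall>j\<in>{1..m}. 0 \<le> c j \<and> c j < 1) \<and> v = (\<Sum>j\<in>{1..m}. c j *\<^sub>R rv (a j))}"

definition Mset :: "nat \<Rightarrow> (nat \<Rightarrow> int ^ ('n::finite)) \<Rightarrow> (int ^ 'n) set" where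
  "Mset m a = {u \<in> VZ m a. rv u \<in> coneA m a}"

definition Bset :: "nat \<Rightarrow> (nat \<Rightarrow> int ^ ('n::finite)) \<Rightarrow> (int ^ 'n) set" where
  "Bset m a = {u \<in> VZ m a. rv u \<in> parA m a}"

definition Sprime :: "nat \<Rightarrow> (nat \<Rightarrow> int ^ ('n::finite)) \<Rightarrow> 'n laurent set" where
  "Sprime m a = {p. Poly_Mapping.keys p \<subseteq> Mset m a}"

definition Jideal :: "('n::finite) laurent \<Rightarrow> 'n laurent set \<Rightarrow> 'n laurent set" where
  "Jideal f S = {\<Sum>i\<in>UNIV. euler_op i f * g i | g. \<forall>i. g i \<in> S}"

end

theory Submission
  imports Defs
begin

(* Modulo J the Euler derivatives of f_lambda give the relations x^(v + a_j) = lam x^(v + a_0)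
   for all v in M: each x_i df/dx_i is a combination of the binomials x^(a_j) - lam x^(a_0), and a
   dual basis of a_1, ..., a_m recovers every single binomial.  Writing u in M as b + sum k_j a_j
   with b in B and natural k_j, these relations reduce x^u to lam^|k| x^(b + |k| a_0); repeating
   this on x^(b + a_0) rewrites a state (n, b), standing for x^(b + n a_0), deterministically.
   The quantity n + sum of the coordinates of b is invariant, so the orbit either reaches n = 0,
   i.e. a monomial x^b with b in B, or runs into a cycle of positive weight W, in which case
   (1 - lam^W) x^u is in J and hence so is x^u.  This gives spanning.  Reading off the coefficient
   of x^c at the end of the orbit defines linear functionals on S' that vanish on J, because the
   rewriting is compatible with the relations, and are dual to x^B; this gives independence. *)

section \<open>Laurent polynomials, Euler operators and the ideal J\<close>

lemma rv_add: "rv (u + w) = rv u + rv w"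
  by (simp add: rv_def vec_eq_iff)

lemma rv_diff: "rv (u - w) = rv u - rv w"
  by (simp add: rv_def vec_eq_iff)

lemma rv_scaleR: "rv (k *s u) = of_int k *\<^sub>R rv u"
  by (simp add: rv_def vec_eq_iff)

lemma rv_sum: "rv (sum f S) = (\<Sum>x\<in>S. rv (f x))"
  by (induction S rule: infinite_finite_induct) (auto simp: rv_add rv_def vec_eq_iff)

lemma inj_rv: "inj rv"
  by (rule injI) (simp add: rv_def vec_eq_iff)

lemma rv_component: "rv u $ i = of_int (u $ i)"
  by (simp add: rv_def)

definition ratfun_of_real :: "real \<Rightarrow> ratfun" where
  "ratfun_of_real r = Fract [:complex_of_real r:] 1"

lemma ratfun_of_real_add: "ratfun_of_real (x + y) = ratfun_of_real x + ratfun_of_real y"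
  by (simp add: ratfun_of_real_def)

lemma ratfun_of_real_mult: "ratfun_of_real (x * y) = ratfun_of_real x * ratfun_of_real y"
  by (simp add: ratfun_of_real_def mult_to_poly mult.commute)

lemma ratfun_of_real_0: "ratfun_of_real 0 = 0"
  by (simp add: ratfun_of_real_def Zero_fract_def)

lemma ratfun_of_real_sum: "ratfun_of_real (sum f S) = (\<Sum>x\<in>S. ratfun_of_real (f x))"
  by (induction S rule: infinite_finite_induct) (simp_all add: ratfun_of_real_0 ratfun_of_real_add)

lemma ratfun_of_real_of_nat: "ratfun_of_real (of_nat n) = of_nat n"
  by (simp add: ratfun_of_real_def of_nat_fract of_nat_poly)

lemma ratfun_of_real_1: "ratfun_of_real 1 = 1"
  using ratfun_of_real_of_nat[of 1] by simp

lemma ratfun_of_real_of_int: "ratfun_of_real (of_int k) = of_int k"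
proof (cases k rule: int_cases)
  case (nonneg n)
  then show ?thesis
    using ratfun_of_real_of_nat[of n] by simp
next
  case (neg n)
  have "ratfun_of_real (- x) = - ratfun_of_real x" for x
    by (simp add: ratfun_of_real_def minus_fract)
  then have "ratfun_of_real (- of_nat (Suc n)) = - of_nat (Suc n)"
    by (simp only: ratfun_of_real_of_nat)
  with neg show ?thesis
    by simp
qed

lemma lam_power_neq_1:
  assumes "0 < n" shows "lam ^ n \<noteq> 1"
proof
  assume "lam ^ n = 1"
  moreover have "lam ^ k = Fract ([:0, 1:] ^ k) 1" for k
    by (induction k) (simp_all add: lam_def One_fract_def)
  ultimately have "([:0, 1:] ^ n :: complex poly) = 1"
    by (simp add: One_fract_def eq_fract)
  then have "degree ([:0, 1:] ^ n :: complex poly) = 0" by simp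
  with assms show False by (simp add: degree_linear_power)
qed

lemma single_sum: "Poly_Mapping.single k (sum f S) = (\<Sum>x\<in>S. Poly_Mapping.single k (f x))"
  by (induction S rule: infinite_finite_induct) (simp_all add: single_add)

lemma poly_mapping_eq_sum_single:
  "p = (\<Sum>v\<in>Poly_Mapping.keys p. Poly_Mapping.single v (Poly_Mapping.lookup p v))"
  by (rule poly_mapping_eqI) (simp add: lookup_sum lookup_single when_def in_keys_iff)

lemma mult_eq_sum_single:
  "p * q = (\<Sum>v\<in>Poly_Mapping.keys q. p * Poly_Mapping.single v (Poly_Mapping.lookup q v))"
  using arg_cong[OF poly_mapping_eq_sum_single[of q], of "\<lambda>r. p * r"] by (simp add: sum_distrib_left)

lemma lookup_euler_op:
  "Poly_Mapping.lookup (euler_op i p) u = of_int (u $ i) * Poly_Mapping.lookup p u"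
  by (simp add: euler_op_def lookup_mapp when_def in_keys_iff)

lemma euler_op_diff: "euler_op i (p - q) = euler_op i p - euler_op i q"
  by (rule poly_mapping_eqI) (simp add: lookup_euler_op lookup_minus right_diff_distrib)

lemma euler_op_add: "euler_op i (p + q) = euler_op i p + euler_op i q"
  by (rule poly_mapping_eqI) (simp add: lookup_euler_op lookup_add distrib_left)

lemma euler_op_sum: "euler_op i (sum f S) = (\<Sum>x\<in>S. euler_op i (f x))"
proof -
  have "euler_op i 0 = 0"
    by (rule poly_mapping_eqI) (simp add: lookup_euler_op)
  then show ?thesis
    by (induction S rule: infinite_finite_induct) (simp_all add: euler_op_add)
qed

lemma euler_op_single:
  "euler_op i (Poly_Mapping.single u c) = Poly_Mapping.single u (of_int (u $ i) * c)"
  by (rule poly_mapping_eqI) (simp add: lookup_euler_op lookup_single when_def)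

lemma Jideal_keys_zero: "0 \<in> Jideal f {p. Poly_Mapping.keys p \<subseteq> K}"
  unfolding Jideal_def by (rule CollectI, rule exI[of _ "\<lambda>_. 0"]) simp

lemma Jideal_keys_diff:
  assumes "p \<in> Jideal f {p. Poly_Mapping.keys p \<subseteq> K}" "q \<in> Jideal f {p. Poly_Mapping.keys p \<subseteq> K}"
  shows "p - q \<in> Jideal f {p. Poly_Mapping.keys p \<subseteq> K}"
proof -
  obtain g h where "p = (\<Sum>i\<in>UNIV. euler_op i f * g i)" "q = (\<Sum>i\<in>UNIV. euler_op i f * h i)"
    and "\<forall>i. Poly_Mapping.keys (g i) \<subseteq> K" "\<forall>i. Poly_Mapping.keys (h i) \<subseteq> K"
    using assms unfolding Jideal_def by auto
  moreover have "Poly_Mapping.keys (g i - h i) \<subseteq> Poly_Mapping.keys (g i) \<union> Poly_Mapping.keys (h i)" for i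
    by (auto simp: in_keys_iff lookup_minus)
  ultimately have "p - q = (\<Sum>i\<in>UNIV. euler_op i f * (g i - h i))"
    and "\<forall>i. Poly_Mapping.keys (g i - h i) \<subseteq> K"
    by (simp_all add: right_diff_distrib sum_subtractf) blast
  then show ?thesis
    unfolding Jideal_def by (auto intro!: exI[of _ "\<lambda>i. g i - h i"])
qed

lemma Jideal_keys_add:
  assumes "p \<in> Jideal f {p. Poly_Mapping.keys p \<subseteq> K}" "q \<in> Jideal f {p. Poly_Mapping.keys p \<subseteq> K}"
  shows "p + q \<in> Jideal f {p. Poly_Mapping.keys p \<subseteq> K}"
  using Jideal_keys_diff[OF assms(1) Jideal_keys_diff[OF Jideal_keys_zero assms(2)]] by simp

lemma Jideal_keys_sum:
  "(\<And>x. x \<in> S \<Longrightarrow> g x \<in> Jideal f {p. Poly_Mapping.keys p \<subseteq> K}) \<Longrightarrow>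
    sum g S \<in> Jideal f {p. Poly_Mapping.keys p \<subseteq> K}"
  by (induction S rule: infinite_finite_induct) (simp_all add: Jideal_keys_zero Jideal_keys_add)

lemma Jideal_keys_diff_trans:
  assumes "x - y \<in> Jideal f {p. Poly_Mapping.keys p \<subseteq> K}" "y - z \<in> Jideal f {p. Poly_Mapping.keys p \<subseteq> K}"
  shows "x - z \<in> Jideal f {p. Poly_Mapping.keys p \<subseteq> K}"
  using Jideal_keys_add[OF assms] by simp

lemma independent_dual_vector:
  fixes S :: "'a::euclidean_space set"
  assumes "independent S" "x \<in> S"
  obtains w where "\<And>y. y \<in> S \<Longrightarrow> y \<bullet> w = (if y = x then 1 else 0)"
proof -
  obtain g :: "'a \<Rightarrow> real" where "linear g" and g: "\<And>y. y \<in> S \<Longrightarrow> g y = (if y = x then 1 else 0)"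
    using linear_independent_extend[OF assms(1), of "\<lambda>y. if y = x then 1 else 0"] by blast
  then have "y \<bullet> adjoint g 1 = g y" for y
    by (simp add: adjoint_works)
  with g show ?thesis by (intro that[of "adjoint g 1"]) simp
qed

lemma funpow_cycle:
  assumes "finite T" "\<And>n. (f ^^ n) x \<in> T"
  obtains i d where "0 < d" "(f ^^ d) ((f ^^ i) x) = (f ^^ i) x"
proof -
  have "finite (range (\<lambda>n. (f ^^ n) x))"
    using assms by (meson finite_subset image_subsetI)
  then have "\<not> inj (\<lambda>n. (f ^^ n) x)"
    using finite_imageD infinite_UNIV_nat by blast
  then obtain i j where "i < j" "(f ^^ j) x = (f ^^ i) x"
    unfolding inj_def by (metis nat_neq_iff)
  moreover obtain d where "j = d + i" "0 < d"
    using less_imp_add_positive[OF \<open>i < j\<close>] by (auto simp: add.commute)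
  ultimately have "(f ^^ d) ((f ^^ i) x) = (f ^^ i) x"
    by (simp add: funpow_add)
  with \<open>0 < d\<close> show ?thesis by (rule that)
qed

section \<open>Coordinates with respect to a_1, ..., a_m\<close>

locale barycentric_circuit =
  fixes m :: nat and a :: "nat \<Rightarrow> int ^ 'n::finite" and a0 :: "int ^ 'n" and l :: "nat \<Rightarrow> nat"
  assumes inj: "inj_on a {1..m}"
    and indep: "independent (rv ` a ` {1..m})"
    and lpos: "\<forall>j\<in>{0..m}. 0 < l j"
    and rel: "of_nat (l 0) *s a0 = (\<Sum>j\<in>{1..m}. of_nat (l j) *s a j)"
    and l0: "l 0 = (\<Sum>j\<in>{1..m}. l j)"
begin

(* Otherwise the simplifier turns {1..m} into {Suc 0..m} and the lemmas below stop matching. *)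
declare One_nat_def [simp del]

definition coord :: "int ^ 'n \<Rightarrow> nat \<Rightarrow> real" where
  "coord u j = representation (rv ` a ` {1..m}) (rv u) (rv (a j))"

lemma inj_on_rv_a: "inj_on (rv \<circ> a) {1..m}"
  by (rule comp_inj_on[OF inj inj_on_subset[OF inj_rv subset_UNIV]])

lemma rv_a_in_span: "j \<in> {1..m} \<Longrightarrow> rv (a j) \<in> span (rv ` a ` {1..m})"
  by (intro span_base imageI)

lemma sum_coord:
  assumes "u \<in> VZ m a"
  shows "rv u = (\<Sum>j\<in>{1..m}. coord u j *\<^sub>R rv (a j))"
proof -
  have "rv u = (\<Sum>v\<in>rv ` a ` {1..m}. representation (rv ` a ` {1..m}) (rv u) v *\<^sub>R v)"
    using assms indep by (simp add: VZ_def sum_representation_eq)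
  then show ?thesis
    using sum.reindex[OF inj_on_rv_a, of "\<lambda>v. representation (rv ` a ` {1..m}) (rv u) v *\<^sub>R v"]
    by (simp add: coord_def image_comp)
qed

lemma coord_eqI:
  assumes "rv u = (\<Sum>k\<in>{1..m}. c k *\<^sub>R rv (a k))" "j \<in> {1..m}"
  shows "coord u j = c j"
proof -
  have "coord u j = (\<Sum>k\<in>{1..m}. representation (rv ` a ` {1..m}) (c k *\<^sub>R rv (a k)) (rv (a j)))"
    unfolding coord_def assms(1)
    by (subst representation_sum[OF indep]) (simp_all add: span_scale rv_a_in_span)
  also have "\<dots> = (\<Sum>k\<in>{1..m}. if k = j then c k else 0)"
  proof (rule sum.cong)
    fix k assume k: "k \<in> {1..m}"
    then have "rv (a j) = rv (a k) \<longleftrightarrow> j = k"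
      using inj_onD[OF inj_on_rv_a, of j k] assms(2) by auto
    moreover have "rv (a k) \<in> rv ` a ` {1..m}"
      using k by (intro imageI)
    ultimately show "representation (rv ` a ` {1..m}) (c k *\<^sub>R rv (a k)) (rv (a j))
        = (if k = j then c k else 0)"
      by (simp add: representation_scale[OF indep] representation_basis[OF indep] span_base)
  qed simp
  finally show ?thesis
    using assms(2) by simp
qed

lemma VZ_add: "u \<in> VZ m a \<Longrightarrow> w \<in> VZ m a \<Longrightarrow> u + w \<in> VZ m a"
  by (simp add: VZ_def rv_add span_add)

lemma VZ_diff: "u \<in> VZ m a \<Longrightarrow> w \<in> VZ m a \<Longrightarrow> u - w \<in> VZ m a"
  by (simp add: VZ_def rv_diff span_diff)

lemma VZ_comb: "(\<Sum>k\<in>{1..m}. c k *s a k) \<in> VZ m a"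
  unfolding VZ_def mem_Collect_eq rv_sum rv_scaleR by (intro span_sum span_scale rv_a_in_span)

lemma VZ_a: "j \<in> {1..m} \<Longrightarrow> a j \<in> VZ m a"
  by (simp add: VZ_def rv_a_in_span)

lemma coord_add: "u \<in> VZ m a \<Longrightarrow> w \<in> VZ m a \<Longrightarrow> coord (u + w) j = coord u j + coord w j"
  using indep by (simp add: coord_def VZ_def rv_add representation_add)

lemma coord_diff: "u \<in> VZ m a \<Longrightarrow> w \<in> VZ m a \<Longrightarrow> coord (u - w) j = coord u j - coord w j"
  using indep by (simp add: coord_def VZ_def rv_diff representation_diff)

lemma coord_comb: "j \<in> {1..m} \<Longrightarrow> coord (\<Sum>k\<in>{1..m}. c k *s a k) j = of_int (c j)"
  by (rule coord_eqI) (simp_all add: rv_sum rv_scaleR)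

lemma coord_add_comb:
  "u \<in> VZ m a \<Longrightarrow> j \<in> {1..m} \<Longrightarrow>
    coord (u + (\<Sum>k\<in>{1..m}. c k *s a k)) j = coord u j + of_int (c j)"
  by (simp add: coord_add VZ_comb coord_comb)

lemma sum_delta_a:
  assumes "j \<in> {1..m}"
  shows "(\<Sum>k\<in>{1..m}. (if k = j then 1 else 0) *s a k) = a j"
proof -
  have "(\<Sum>k\<in>{1..m}. (if k = j then 1 else 0) *s a k) = (\<Sum>k\<in>{1..m}. if k = j then a k else 0)"
    by (rule sum.cong) auto
  with assms show ?thesis
    by simp
qed

lemma l0_pos: "0 < l 0"
  using lpos by simp

lemma rv_a0: "rv a0 = (\<Sum>j\<in>{1..m}. (l j / l 0) *\<^sub>R rv (a j))"
proof -
  have "real (l 0) *\<^sub>R rv a0 = (\<Sum>j\<in>{1..m}. real (l j) *\<^sub>R rv (a j))"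
    using arg_cong[OF rel, of rv] by (simp add: rv_scaleR rv_sum)
  moreover have "rv a0 = (1 / l 0) *\<^sub>R (real (l 0) *\<^sub>R rv a0)"
    using l0_pos by simp
  ultimately show ?thesis
    by (simp add: scaleR_sum_right)
qed

lemma VZ_a0: "a0 \<in> VZ m a"
  unfolding VZ_def mem_Collect_eq rv_a0 by (intro span_sum span_scale rv_a_in_span)

lemma coord_a0: "j \<in> {1..m} \<Longrightarrow> coord a0 j = l j / l 0"
  by (rule coord_eqI[OF rv_a0])

lemma sum_coord_a0: "(\<Sum>j\<in>{1..m}. coord a0 j) = 1"
proof -
  have "real (l 0) = (\<Sum>j\<in>{1..m}. real (l j))"
    using l0 by simp
  then show ?thesis
    using l0_pos by (simp add: coord_a0 flip: sum_divide_distrib)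
qed

lemma Mset_iff: "u \<in> Mset m a \<longleftrightarrow> u \<in> VZ m a \<and> (\<forall>j\<in>{1..m}. 0 \<le> coord u j)"
proof
  assume "u \<in> Mset m a"
  then obtain c where "u \<in> VZ m a" "\<forall>j\<in>{1..m}. 0 \<le> c j"
    "rv u = (\<Sum>j\<in>{1..m}. c j *\<^sub>R rv (a j))"
    unfolding Mset_def coneA_def by blast
  then show "u \<in> VZ m a \<and> (\<forall>j\<in>{1..m}. 0 \<le> coord u j)"
    by (simp add: coord_eqI)
next
  assume "u \<in> VZ m a \<and> (\<forall>j\<in>{1..m}. 0 \<le> coord u j)"
  then show "u \<in> Mset m a"
    unfolding Mset_def coneA_def using sum_coord[of u] by (auto intro!: exI[of _ "coord u"])
qed

lemma Bset_iff:
  "u \<in> Bset m a \<longleftrightarrow> u \<in> VZ m a \<and> (\<forall>j\<in>{1..m}. 0 \<le> coord u j \<and> coord u j < 1)"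
proof
  assume "u \<in> Bset m a"
  then obtain c where "u \<in> VZ m a" "\<forall>j\<in>{1..m}. 0 \<le> c j \<and> c j < 1"
    "rv u = (\<Sum>j\<in>{1..m}. c j *\<^sub>R rv (a j))"
    unfolding Bset_def parA_def by blast
  then show "u \<in> VZ m a \<and> (\<forall>j\<in>{1..m}. 0 \<le> coord u j \<and> coord u j < 1)"
    by (simp add: coord_eqI)
next
  assume "u \<in> VZ m a \<and> (\<forall>j\<in>{1..m}. 0 \<le> coord u j \<and> coord u j < 1)"
  then show "u \<in> Bset m a"
    unfolding Bset_def parA_def using sum_coord[of u] by (auto intro!: exI[of _ "coord u"])
qed

lemma Bset_imp_Mset: "b \<in> Bset m a \<Longrightarrow> b \<in> Mset m a"
  by (simp add: Bset_iff Mset_iff)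

lemma Mset_imp_VZ: "u \<in> Mset m a \<Longrightarrow> u \<in> VZ m a"
  by (simp add: Mset_iff)

lemma Mset_add: "u \<in> Mset m a \<Longrightarrow> w \<in> Mset m a \<Longrightarrow> u + w \<in> Mset m a"
  by (simp add: Mset_iff VZ_add coord_add)

lemma Mset_a0: "a0 \<in> Mset m a"
  by (simp add: Mset_iff VZ_a0 coord_a0)

lemma Mset_zero: "0 \<in> Mset m a"
  using VZ_comb[of "\<lambda>_. 0"] coord_comb[of _ "\<lambda>_. 0"] by (simp add: Mset_iff)

lemma Mset_of_nat_a0: "of_nat k *s a0 \<in> Mset m a"
  by (induction k) (simp_all add: Mset_zero Mset_add Mset_a0 vector_sadd_rdistrib)

definition bpart :: "int ^ 'n \<Rightarrow> int ^ 'n" where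
  "bpart u = u - (\<Sum>j\<in>{1..m}. \<lfloor>coord u j\<rfloor> *s a j)"

definition depth :: "int ^ 'n \<Rightarrow> nat" where
  "depth u = (\<Sum>j\<in>{1..m}. nat \<lfloor>coord u j\<rfloor>)"

definition height :: "int ^ 'n \<Rightarrow> real" where
  "height u = (\<Sum>j\<in>{1..m}. coord u j)"

lemma coord_bpart: "u \<in> VZ m a \<Longrightarrow> j \<in> {1..m} \<Longrightarrow> coord (bpart u) j = frac (coord u j)"
  by (simp add: bpart_def coord_diff VZ_comb coord_comb frac_def)

lemma VZ_bpart: "u \<in> VZ m a \<Longrightarrow> bpart u \<in> VZ m a"
  by (simp add: bpart_def VZ_diff VZ_comb)

lemma bpart_in_Bset: "u \<in> VZ m a \<Longrightarrow> bpart u \<in> Bset m a"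
  by (simp add: Bset_iff coord_bpart frac_lt_1 VZ_bpart)

lemma floor_coord_Bset: "b \<in> Bset m a \<Longrightarrow> j \<in> {1..m} \<Longrightarrow> \<lfloor>coord b j\<rfloor> = 0"
  by (simp add: Bset_iff floor_eq_iff)

lemma bpart_Bset: "b \<in> Bset m a \<Longrightarrow> bpart b = b"
  by (simp add: bpart_def floor_coord_Bset)

lemma depth_Bset: "b \<in> Bset m a \<Longrightarrow> depth b = 0"
  by (simp add: depth_def floor_coord_Bset)

lemma bpart_add_comb:
  assumes "u \<in> VZ m a"
  shows "bpart (u + (\<Sum>k\<in>{1..m}. c k *s a k)) = bpart u"
proof -
  have "(\<Sum>j\<in>{1..m}. \<lfloor>coord (u + (\<Sum>k\<in>{1..m}. c k *s a k)) j\<rfloor> *s a j)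
      = (\<Sum>j\<in>{1..m}. \<lfloor>coord u j\<rfloor> *s a j) + (\<Sum>k\<in>{1..m}. c k *s a k)"
    using assms by (simp add: coord_add_comb vector_sadd_rdistrib sum.distrib)
  then show ?thesis
    by (simp add: bpart_def)
qed

lemma bpart_add_a: "u \<in> VZ m a \<Longrightarrow> j \<in> {1..m} \<Longrightarrow> bpart (u + a j) = bpart u"
  using bpart_add_comb[of u "\<lambda>k. if k = j then 1 else 0"] by (simp add: sum_delta_a)

lemma bpart_add_a0:
  assumes "u \<in> VZ m a" shows "bpart (u + a0) = bpart (bpart u + a0)"
proof -
  have "u + a0 = (bpart u + a0) + (\<Sum>j\<in>{1..m}. \<lfloor>coord u j\<rfloor> *s a j)"
    by (simp add: bpart_def)
  then have "bpart (u + a0) = bpart ((bpart u + a0) + (\<Sum>j\<in>{1..m}. \<lfloor>coord u j\<rfloor> *s a j))"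
    by (rule arg_cong)
  also have "\<dots> = bpart (bpart u + a0)"
    using assms by (simp add: bpart_add_comb VZ_add VZ_a0 VZ_bpart)
  finally show ?thesis .
qed

lemma coord_Mset_nonneg: "u \<in> Mset m a \<Longrightarrow> j \<in> {1..m} \<Longrightarrow> 0 \<le> coord u j"
  by (simp add: Mset_iff)

lemma depth_add_comb:
  assumes "u \<in> Mset m a" "\<forall>j\<in>{1..m}. 0 \<le> c j"
  shows "depth (u + (\<Sum>k\<in>{1..m}. c k *s a k)) = depth u + (\<Sum>j\<in>{1..m}. nat (c j))"
proof -
  have "depth (u + (\<Sum>k\<in>{1..m}. c k *s a k)) = (\<Sum>j\<in>{1..m}. nat \<lfloor>coord u j\<rfloor> + nat (c j))"
    unfolding depth_def using assms
    by (intro sum.cong) (simp_all add: coord_add_comb Mset_imp_VZ coord_Mset_nonneg nat_add_distrib)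
  then show ?thesis
    by (simp add: sum.distrib depth_def)
qed

lemma depth_add_a:
  assumes "u \<in> Mset m a" "j \<in> {1..m}"
  shows "depth (u + a j) = Suc (depth u)"
proof -
  have "(\<Sum>k\<in>{1..m}. nat (if k = j then 1 else 0)) = 1"
    using assms(2) by (simp add: if_distrib[of nat] cong: if_cong)
  then show ?thesis
    using depth_add_comb[OF assms(1), of "\<lambda>k. if k = j then 1 else 0"] by (simp add: sum_delta_a[OF assms(2)])
qed

lemma depth_add_a0:
  assumes "u \<in> Mset m a"
  shows "depth (u + a0) = depth u + depth (bpart u + a0)"
proof -
  have "u + a0 = (bpart u + a0) + (\<Sum>j\<in>{1..m}. \<lfloor>coord u j\<rfloor> *s a j)"
    by (simp add: bpart_def)
  then have "depth (u + a0) = depth ((bpart u + a0) + (\<Sum>j\<in>{1..m}. \<lfloor>coord u j\<rfloor> *s a j))"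
    by (rule arg_cong)
  also have "\<dots> = depth (bpart u + a0) + depth u"
    using assms unfolding depth_def[of u]
    by (intro depth_add_comb)
       (simp_all add: Mset_add Mset_a0 Bset_imp_Mset bpart_in_Bset Mset_imp_VZ coord_Mset_nonneg)
  finally show ?thesis
    by simp
qed

lemma height_eq_depth_plus:
  assumes "u \<in> Mset m a" shows "height u = depth u + height (bpart u)"
proof -
  have "real (depth u) = (\<Sum>j\<in>{1..m}. real_of_int \<lfloor>coord u j\<rfloor>)"
    unfolding depth_def of_nat_sum using assms by (intro sum.cong) (simp_all add: coord_Mset_nonneg)
  then show ?thesis
    using assms
    by (simp add: height_def bpart_def coord_diff Mset_imp_VZ VZ_comb coord_comb sum_subtractf)
qed

lemma height_add_a0: "u \<in> VZ m a \<Longrightarrow> height (u + a0) = height u + 1"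
  by (simp add: height_def coord_add VZ_a0 sum.distrib sum_coord_a0)

lemma height_Bset_nonneg: "b \<in> Bset m a \<Longrightarrow> 0 \<le> height b"
  unfolding height_def by (rule sum_nonneg) (simp add: Bset_iff)

lemma Mset_diff_a:
  assumes "u \<in> Mset m a" "depth u \<noteq> 0"
  obtains j where "j \<in> {1..m}" "u - a j \<in> Mset m a"
proof -
  obtain j where j: "j \<in> {1..m}" "nat \<lfloor>coord u j\<rfloor> \<noteq> 0"
    using assms(2) unfolding depth_def by (meson sum.neutral)
  have "0 \<le> coord (u - a j) k" if "k \<in> {1..m}" for k
  proof -
    have "coord (a j) k = (if k = j then 1 else 0)"
      using coord_comb[OF that, of "\<lambda>k. if k = j then 1 else 0"] by (simp add: sum_delta_a[OF j(1)])
    then show ?thesis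
      using assms(1) j(2) that by (auto simp: coord_diff Mset_iff VZ_a[OF j(1)])
  qed
  then show ?thesis
    using assms(1) j(1) by (intro that[of j]) (simp_all add: Mset_iff VZ_diff VZ_a)
qed

lemma finite_Bset: "finite (Bset m a)"
proof -
  define R where "R i = (\<Sum>j\<in>{1..m}. \<bar>a j $ i\<bar>)" for i
  have bound: "\<bar>b $ i\<bar> \<le> R i" if b: "b \<in> Bset m a" for b i
  proof -
    have "real_of_int (b $ i) = (\<Sum>j\<in>{1..m}. coord b j * real_of_int (a j $ i))"
      using sum_coord[of b] b by (simp add: Bset_iff rv_component vec_eq_iff sum_component)
    also have "\<bar>\<dots>\<bar> \<le> (\<Sum>j\<in>{1..m}. real_of_int \<bar>a j $ i\<bar>)"
    proof (intro order.trans[OF sum_abs] sum_mono)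
      fix j assume "j \<in> {1..m}"
      then have "0 \<le> coord b j" "coord b j \<le> 1"
        using b by (auto simp: Bset_iff less_imp_le)
      then show "\<bar>coord b j * real_of_int (a j $ i)\<bar> \<le> real_of_int \<bar>a j $ i\<bar>"
        by (simp add: abs_mult mult_left_le_one_le)
    qed
    finally have "real_of_int \<bar>b $ i\<bar> \<le> real_of_int (R i)"
      by (simp add: R_def)
    then show ?thesis
      by simp
  qed
  have "Bset m a \<subseteq> vec_lambda ` (\<Pi>\<^sub>E i\<in>UNIV. {- R i..R i})"
  proof
    fix b assume "b \<in> Bset m a"
    then have "- R i \<le> b $ i \<and> b $ i \<le> R i" for i
      using bound[of b i] by arith
    then have "vec_nth b \<in> (\<Pi>\<^sub>E i\<in>UNIV. {- R i..R i})"
      by (simp add: PiE_iff)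
    then show "b \<in> vec_lambda ` (\<Pi>\<^sub>E i\<in>UNIV. {- R i..R i})"
      by (rule rev_image_eqI) simp
  qed
  then show ?thesis
    by (rule finite_subset) (simp add: finite_PiE)
qed

section \<open>The binomial relations generating J\<close>

abbreviation J :: "'n laurent set" where
  "J \<equiv> Jideal (f_lambda m a a0 l) (Sprime m a)"

lemmas J_zero = Jideal_keys_zero[of _ "Mset m a", folded Sprime_def]
  and J_add = Jideal_keys_add[of _ _ "Mset m a", folded Sprime_def]
  and J_sum = Jideal_keys_sum[of _ _ _ "Mset m a", folded Sprime_def]
  and J_diff_trans = Jideal_keys_diff_trans[of _ _ _ "Mset m a", folded Sprime_def]

definition rel_binomial :: "nat \<Rightarrow> int ^ 'n \<Rightarrow> ratfun \<Rightarrow> 'n laurent" where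
  "rel_binomial j v c = Poly_Mapping.single (a j + v) c - Poly_Mapping.single (a0 + v) (lam * c)"

lemma rel_binomial_sum: "(\<Sum>x\<in>S. rel_binomial j v (g x)) = rel_binomial j v (sum g S)"
  by (simp add: rel_binomial_def single_sum sum_subtractf sum_distrib_left)

lemma rel_binomial_mult_single:
  "rel_binomial j 0 c * Poly_Mapping.single v d = rel_binomial j v (c * d)"
  by (simp add: rel_binomial_def left_diff_distrib mult_single mult.assoc)

lemma euler_op_f_lambda:
  "euler_op i (f_lambda m a a0 l) = (\<Sum>k\<in>{1..m}. rel_binomial k 0 (of_nat (l k) * of_int (a k $ i)))"
proof -
  have "int (l 0) * a0 $ i = (\<Sum>k\<in>{1..m}. int (l k) * a k $ i)"
    using arg_cong[OF rel, of "\<lambda>v. v $ i"] by (simp add: sum_component)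
  then have "(of_int (int (l 0) * a0 $ i) :: ratfun) = of_int (\<Sum>k\<in>{1..m}. int (l k) * a k $ i)"
    by (rule arg_cong)
  then have rel_i: "(of_int (a0 $ i) * of_nat (l 0) :: ratfun) = (\<Sum>k\<in>{1..m}. of_nat (l k) * of_int (a k $ i))"
    by (simp add: mult.commute)
  have "euler_op i (f_lambda m a a0 l) = (\<Sum>k\<in>{1..m}. Poly_Mapping.single (a k) (of_nat (l k) * of_int (a k $ i)))
      - Poly_Mapping.single a0 (lam * (of_int (a0 $ i) * of_nat (l 0)))"
    by (simp add: f_lambda_def euler_op_diff euler_op_sum euler_op_single mult_ac)
  also have "\<dots> = (\<Sum>k\<in>{1..m}. Poly_Mapping.single (a k) (of_nat (l k) * of_int (a k $ i)))
      - (\<Sum>k\<in>{1..m}. Poly_Mapping.single a0 (lam * (of_nat (l k) * of_int (a k $ i))))"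
    by (simp add: rel_i single_sum sum_distrib_left)
  finally show ?thesis
    by (simp add: rel_binomial_def sum_subtractf)
qed

lemma dual_coefficients:
  assumes j: "j \<in> {1..m}"
  shows "\<exists>e :: 'n \<Rightarrow> ratfun. \<forall>k\<in>{1..m}.
    (\<Sum>i\<in>UNIV. of_nat (l k) * of_int (a k $ i) * e i) = (if k = j then 1 else 0)"
proof -
  obtain w where w: "\<And>y. y \<in> rv ` a ` {1..m} \<Longrightarrow> y \<bullet> w = (if y = rv (a j) then 1 else 0)"
    using independent_dual_vector[OF indep] j by blast
  define w' where "w' = (1 / real (l j)) *\<^sub>R w"
  have "(\<Sum>i\<in>UNIV. of_nat (l k) * of_int (a k $ i) * ratfun_of_real (w' $ i)) = (if k = j then 1 else 0)"
    if "k \<in> {1..m}" for k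
  proof -
    have "real (l k) * (rv (a k) \<bullet> w') = (if k = j then 1 else 0)"
      using w[of "rv (a k)"] inj_onD[OF inj_on_rv_a, of k j] that j lpos by (auto simp: w'_def)
    moreover have "(\<Sum>i\<in>UNIV. of_nat (l k) * of_int (a k $ i) * ratfun_of_real (w' $ i))
        = ratfun_of_real (real (l k) * (rv (a k) \<bullet> w'))"
      by (simp add: inner_vec_def rv_component sum_distrib_left ratfun_of_real_sum ratfun_of_real_mult
          ratfun_of_real_of_nat ratfun_of_real_of_int mult_ac)
    ultimately show ?thesis
      by (simp add: ratfun_of_real_0 ratfun_of_real_1)
  qed
  then show ?thesis
    by (intro exI[of _ "\<lambda>i. ratfun_of_real (w' $ i)"] ballI)
qed

lemma rel_binomial_in_J:
  assumes j: "j \<in> {1..m}" and v: "v \<in> Mset m a"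
  shows "rel_binomial j v c \<in> J"
proof -
  obtain e :: "'n \<Rightarrow> ratfun"
    where e: "\<forall>k\<in>{1..m}. (\<Sum>i\<in>UNIV. of_nat (l k) * of_int (a k $ i) * e i) = (if k = j then 1 else 0)"
    using dual_coefficients[OF j] by blast
  define g where "g i = Poly_Mapping.single v (e i * c)" for i
  have "(\<Sum>i\<in>UNIV. euler_op i (f_lambda m a a0 l) * g i)
      = (\<Sum>i\<in>UNIV. \<Sum>k\<in>{1..m}. rel_binomial k v (of_nat (l k) * of_int (a k $ i) * e i * c))"
    by (simp add: g_def euler_op_f_lambda sum_distrib_right rel_binomial_mult_single mult.assoc)
  also have "\<dots> = (\<Sum>k\<in>{1..m}. \<Sum>i\<in>UNIV. rel_binomial k v (of_nat (l k) * of_int (a k $ i) * e i * c))"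
    by (rule sum.swap)
  also have "\<dots> = (\<Sum>k\<in>{1..m}. rel_binomial k v ((\<Sum>i\<in>UNIV. of_nat (l k) * of_int (a k $ i) * e i) * c))"
    by (simp add: rel_binomial_sum sum_distrib_right)
  also have "\<dots> = (\<Sum>k\<in>{1..m}. if k = j then rel_binomial j v c else 0)"
    by (rule sum.cong) (simp_all add: e rel_binomial_def)
  also have "\<dots> = rel_binomial j v c"
    using j by simp
  finally have "rel_binomial j v c = (\<Sum>i\<in>UNIV. euler_op i (f_lambda m a a0 l) * g i)" ..
  moreover have "g i \<in> Sprime m a" for i
    using v by (simp add: g_def Sprime_def)
  ultimately show ?thesis
    unfolding Jideal_def by (auto intro!: exI[of _ g])
qed

lemma bpart_depth_0:
  assumes "u \<in> Mset m a" "depth u = 0"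
  shows "bpart u = u"
proof -
  have "\<lfloor>coord u j\<rfloor> = 0" if "j \<in> {1..m}" for j
    using assms that coord_Mset_nonneg[OF assms(1) that] by (simp add: depth_def floor_eq_iff)
  then show ?thesis
    by (simp add: bpart_def)
qed

lemma reduce_depth:
  assumes "w \<in> Mset m a" "u \<in> Mset m a"
  shows "Poly_Mapping.single (w + u) c
    - Poly_Mapping.single (w + bpart u + of_nat (depth u) *s a0) (lam ^ depth u * c) \<in> J"
  using assms
proof (induction "depth u" arbitrary: w u c)
  case 0
  then show ?case
    by (simp add: bpart_depth_0 J_zero)
next
  case (Suc n)
  obtain j where j: "j \<in> {1..m}" and "u - a j \<in> Mset m a"
    using Mset_diff_a[OF Suc.prems(2)] Suc.hyps(2) by auto
  define u' where "u' = u - a j"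
  have u'M: "u' \<in> Mset m a" and u: "u = u' + a j"
    using \<open>u - a j \<in> Mset m a\<close> by (simp_all add: u'_def)
  have n: "n = depth u'" and bpart_u: "bpart u = bpart u'"
    using Suc.hyps(2) u'M j by (simp_all add: u depth_add_a bpart_add_a Mset_imp_VZ)
  have "rel_binomial j (w + u') c \<in> J"
    using j u'M Suc.prems(1) by (simp add: rel_binomial_in_J Mset_add)
  moreover have "a j + (w + u') = w + u" "a0 + (w + u') = (w + a0) + u'"
    by (simp_all add: u add_ac)
  ultimately have first: "Poly_Mapping.single (w + u) c - Poly_Mapping.single ((w + a0) + u') (lam * c) \<in> J"
    by (simp add: rel_binomial_def)
  have depth_u: "depth u = Suc (depth u')"
    using Suc.hyps(2) n by simp
  have exp_eq: "(w + a0) + bpart u' + of_nat (depth u') *s a0 = w + bpart u + of_nat (depth u) *s a0"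
    by (simp add: depth_u bpart_u vector_sadd_rdistrib algebra_simps)
  have coeff_eq: "lam ^ depth u' * (lam * c) = lam ^ depth u * c"
    by (simp add: depth_u)
  have second: "Poly_Mapping.single ((w + a0) + u') (lam * c)
      - Poly_Mapping.single (w + bpart u + of_nat (depth u) *s a0) (lam ^ depth u * c) \<in> J"
    using Suc.hyps(1)[OF n Mset_add[OF Suc.prems(1) Mset_a0] u'M, of "lam * c"]
    unfolding exp_eq coeff_eq .
  show ?case
    by (rule J_diff_trans[OF first second])
qed

section \<open>Rewriting of states and normal forms\<close>

(* x^(b + (n+1) a_0) = x^(n a_0 + bpart (b + a_0) + sum k_j a_j) reduces to
   lam^depth (b + a_0) x^(bpart (b + a_0) + (n + depth (b + a_0)) a_0). *)
definition step :: "nat \<times> (int ^ 'n) \<Rightarrow> nat \<times> (int ^ 'n)" where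
  "step st = (if fst st = 0 then st else (fst st - 1 + depth (snd st + a0), bpart (snd st + a0)))"

definition weight :: "nat \<times> (int ^ 'n) \<Rightarrow> nat" where
  "weight st = (if fst st = 0 then 0 else depth (snd st + a0))"

definition state_exp :: "nat \<times> (int ^ 'n) \<Rightarrow> int ^ 'n" where
  "state_exp st = snd st + of_nat (fst st) *s a0"

definition path_weight :: "nat \<times> (int ^ 'n) \<Rightarrow> nat \<Rightarrow> nat" where
  "path_weight st n = (\<Sum>t<n. weight ((step ^^ t) st))"

lemma step_Bset: "snd st \<in> Bset m a \<Longrightarrow> snd (step st) \<in> Bset m a"
  by (simp add: step_def bpart_in_Bset VZ_add VZ_a0 Mset_imp_VZ Bset_imp_Mset)

lemma funpow_step_Bset: "snd st \<in> Bset m a \<Longrightarrow> snd ((step ^^ n) st) \<in> Bset m a"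
  by (induction n) (simp_all add: step_Bset)

lemma step_height:
  assumes "snd st \<in> Bset m a"
  shows "real (fst (step st)) + height (snd (step st)) = real (fst st) + height (snd st)"
proof (cases "fst st = 0")
  case False
  have "snd st + a0 \<in> Mset m a"
    using assms by (simp add: Mset_add Bset_imp_Mset Mset_a0)
  then have "height (snd st) + 1 = depth (snd st + a0) + height (bpart (snd st + a0))"
    using assms by (simp flip: height_eq_depth_plus add: height_add_a0 Bset_iff)
  with False show ?thesis
    by (simp add: step_def of_nat_diff)
qed (simp add: step_def)

lemma fst_funpow_step_le:
  assumes "snd st \<in> Bset m a"
  shows "real (fst ((step ^^ n) st)) \<le> real (fst st) + height (snd st)"
proof -
  have "real (fst ((step ^^ n) st)) + height (snd ((step ^^ n) st)) = real (fst st) + height (snd st)"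
    using assms by (induction n) (simp_all add: step_height funpow_step_Bset)
  then show ?thesis
    using height_Bset_nonneg[OF funpow_step_Bset[OF assms, of n]] by linarith
qed

lemma path_weight_Suc: "path_weight st (Suc n) = path_weight st n + weight ((step ^^ n) st)"
  by (simp add: path_weight_def)

lemma path_weight_Suc_shift: "path_weight st (Suc n) = weight st + path_weight (step st) n"
  unfolding path_weight_def sum.lessThan_Suc_shift by (simp del: funpow.simps add: funpow_Suc_right)

lemma step_reduction:
  assumes "snd st \<in> Bset m a"
  shows "Poly_Mapping.single (state_exp st) c
    - Poly_Mapping.single (state_exp (step st)) (lam ^ weight st * c) \<in> J"
proof (cases "fst st")
  case 0
  then show ?thesis
    by (simp add: step_def weight_def J_zero)
next
  case (Suc s)
  let ?u = "snd st + a0"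
  have "state_exp st = of_nat s *s a0 + ?u"
    and "state_exp (step st) = of_nat s *s a0 + bpart ?u + of_nat (depth ?u) *s a0"
    and "weight st = depth ?u"
    by (simp_all add: state_exp_def step_def weight_def Suc vector_sadd_rdistrib algebra_simps)
  moreover have "?u \<in> Mset m a"
    using assms by (simp add: Mset_add Bset_imp_Mset Mset_a0)
  ultimately show ?thesis
    using reduce_depth[OF Mset_of_nat_a0] by simp
qed

lemma funpow_step_reduction:
  assumes "snd st \<in> Bset m a"
  shows "Poly_Mapping.single (state_exp st) c
    - Poly_Mapping.single (state_exp ((step ^^ n) st)) (lam ^ path_weight st n * c) \<in> J"
proof (induction n)
  case 0
  then show ?case
    by (simp add: path_weight_def J_zero)
next
  case (Suc n)
  have "lam ^ weight ((step ^^ n) st) * (lam ^ path_weight st n * c) = lam ^ path_weight st (Suc n) * c"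
    by (simp add: path_weight_Suc power_add mult_ac)
  moreover have "step ((step ^^ n) st) = (step ^^ Suc n) st"
    by simp
  ultimately show ?case
    using J_diff_trans[OF Suc.IH step_reduction[OF funpow_step_Bset[OF assms]]] by (simp only:)
qed

lemma fst_funpow_step:
  assumes "\<And>t. t < d \<Longrightarrow> fst ((step ^^ t) st) \<noteq> 0"
  shows "fst ((step ^^ d) st) + d = fst st + path_weight st d"
  using assms
proof (induction d)
  case (Suc d)
  let ?s = "(step ^^ d) st"
  have "fst ?s \<noteq> 0"
    using Suc.prems by simp
  then have "fst (step ?s) + 1 = fst ?s + weight ?s"
    by (simp add: step_def weight_def)
  moreover have "fst ?s + d = fst st + path_weight st d"
    using Suc.prems by (intro Suc.IH) simp
  ultimately show ?case
    by (simp add: path_weight_Suc)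
qed (simp add: path_weight_def)

lemma nonhalting_orbit_in_J:
  assumes B: "snd st \<in> Bset m a" and nonhalting: "\<And>n. fst ((step ^^ n) st) \<noteq> 0"
  shows "Poly_Mapping.single (state_exp st) c \<in> J"
proof -
  define T where "T = {..nat \<lceil>real (fst st) + height (snd st)\<rceil>} \<times> Bset m a"
  have orbit_in_T: "(step ^^ n) st \<in> T" for n
    using fst_funpow_step_le[OF B, of n] funpow_step_Bset[OF B, of n]
    by (simp add: T_def mem_Times_iff) linarith
  have "finite T"
    by (simp add: T_def finite_Bset)
  then obtain i d where "0 < d" and cycle: "(step ^^ d) ((step ^^ i) st) = (step ^^ i) st"
    using orbit_in_T by (rule funpow_cycle)
  define st' where "st' = (step ^^ i) st"
  have B': "snd st' \<in> Bset m a"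
    by (simp add: st'_def funpow_step_Bset[OF B])
  have "fst ((step ^^ t) st') \<noteq> 0" for t
    using nonhalting[of "t + i"] by (simp add: st'_def funpow_add)
  then have "path_weight st' d = d"
    using fst_funpow_step[of d st'] cycle by (simp add: st'_def)
  with \<open>0 < d\<close> have nonzero: "1 - lam ^ path_weight st' d \<noteq> 0"
    using lam_power_neq_1 by simp
  have cycle_J: "Poly_Mapping.single (state_exp st') e \<in> J" for e
  proof -
    let ?e = "e / (1 - lam ^ path_weight st' d)"
    have "Poly_Mapping.single (state_exp st') ?e
        - Poly_Mapping.single (state_exp st') (lam ^ path_weight st' d * ?e) \<in> J"
      using funpow_step_reduction[OF B', of ?e d] cycle by (simp add: st'_def)
    moreover have "?e - lam ^ path_weight st' d * ?e = (1 - lam ^ path_weight st' d) * ?e"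
      by (simp only: left_diff_distrib mult_1_left)
    ultimately show ?thesis
      using nonzero by (simp flip: single_diff)
  qed
  have "Poly_Mapping.single (state_exp st) c
      - Poly_Mapping.single (state_exp st') (lam ^ path_weight st i * c) \<in> J"
    unfolding st'_def by (rule funpow_step_reduction[OF B])
  from J_add[OF this cycle_J[of "lam ^ path_weight st i * c"]] show ?thesis
    by simp
qed

definition halts :: "nat \<times> (int ^ 'n) \<Rightarrow> bool" where
  "halts st \<longleftrightarrow> (\<exists>n. fst ((step ^^ n) st) = 0)"

definition halt_time :: "nat \<times> (int ^ 'n) \<Rightarrow> nat" where
  "halt_time st = (LEAST n. fst ((step ^^ n) st) = 0)"

definition state_coeff :: "int ^ 'n \<Rightarrow> nat \<times> (int ^ 'n) \<Rightarrow> ratfun" where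
  "state_coeff c st =
    (if halts st \<and> snd ((step ^^ halt_time st) st) = c then lam ^ path_weight st (halt_time st) else 0)"

lemma state_coeff_step:
  assumes "fst st \<noteq> 0"
  shows "state_coeff c st = lam ^ weight st * state_coeff c (step st)"
proof -
  have funpow_Suc: "(step ^^ Suc n) st = (step ^^ n) (step st)" for n
    by (simp del: funpow.simps add: funpow_Suc_right)
  have halts_step: "halts st \<longleftrightarrow> halts (step st)"
  proof
    assume "halts st"
    then obtain n where "fst ((step ^^ n) st) = 0"
      unfolding halts_def by blast
    with assms obtain k where "fst ((step ^^ Suc k) st) = 0"
      by (cases n) auto
    then show "halts (step st)"
      unfolding halts_def funpow_Suc by blast
  next
    assume "halts (step st)"
    then obtain n where "fst ((step ^^ n) (step st)) = 0"
      unfolding halts_def by blast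
    then show "halts st"
      unfolding halts_def funpow_Suc[symmetric] by blast
  qed
  show ?thesis
  proof (cases "halts st")
    case True
    then obtain n where "fst ((step ^^ n) st) = 0"
      unfolding halts_def by blast
    then have "halt_time st = Suc (halt_time (step st))"
      unfolding halt_time_def funpow_Suc[symmetric] using assms by (intro Least_Suc) auto
    with True halts_step show ?thesis
      by (simp add: state_coeff_def path_weight_Suc_shift power_add funpow_Suc del: funpow.simps)
  qed (simp add: state_coeff_def halts_step)
qed

lemma state_coeff_halted: "state_coeff c (0, b) = (if b = c then 1 else 0)"
proof -
  have halts: "halts (0, b)"
    unfolding halts_def by (rule exI[of _ 0]) simp
  have time: "halt_time (0, b) = 0"
    unfolding halt_time_def by (rule Least_eq_0) simp
  show ?thesis
    unfolding state_coeff_def time path_weight_def using halts by simp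
qed

definition monomial_nf_coeff :: "int ^ 'n \<Rightarrow> int ^ 'n \<Rightarrow> ratfun" where
  "monomial_nf_coeff c u = lam ^ depth u * state_coeff c (depth u, bpart u)"

lemma monomial_nf_coeff_add_a:
  assumes "v \<in> Mset m a" "j \<in> {1..m}"
  shows "monomial_nf_coeff c (v + a j) = lam * monomial_nf_coeff c (v + a0)"
proof -
  have "state_coeff c (Suc (depth v), bpart v)
      = lam ^ depth (bpart v + a0) * state_coeff c (depth (v + a0), bpart (v + a0))"
    using assms by (simp add: state_coeff_step step_def weight_def depth_add_a0 bpart_add_a0 Mset_imp_VZ)
  then show ?thesis
    using assms
    by (simp add: monomial_nf_coeff_def depth_add_a bpart_add_a depth_add_a0 Mset_imp_VZ power_add mult_ac)
qed

lemma monomial_nf_coeff_Bset: "b \<in> Bset m a \<Longrightarrow> monomial_nf_coeff c b = (if b = c then 1 else 0)"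
  by (simp add: monomial_nf_coeff_def depth_Bset bpart_Bset state_coeff_halted)

lemma state_normal_form:
  assumes B: "snd st \<in> Bset m a"
  shows "Poly_Mapping.single (state_exp st) d
    - (\<Sum>c\<in>Bset m a. Poly_Mapping.single c (state_coeff c st * d)) \<in> J"
proof (cases "halts st")
  case True
  define N where "N = halt_time st"
  define b where "b = snd ((step ^^ N) st)"
  have "fst ((step ^^ N) st) = 0"
    using True unfolding halts_def N_def halt_time_def by (rule LeastI_ex)
  then have "state_exp ((step ^^ N) st) = b"
    by (simp add: state_exp_def b_def)
  then have "Poly_Mapping.single (state_exp st) d - Poly_Mapping.single b (lam ^ path_weight st N * d) \<in> J"
    using funpow_step_reduction[OF B, of d N] by (simp only:)
  moreover have "(\<Sum>c\<in>Bset m a. Poly_Mapping.single c (state_coeff c st * d))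
      = Poly_Mapping.single b (lam ^ path_weight st N * d)"
  proof -
    have "b \<in> Bset m a"
      unfolding b_def by (rule funpow_step_Bset[OF B])
    moreover have "Poly_Mapping.single c (state_coeff c st * d)
        = (if c = b then Poly_Mapping.single b (lam ^ path_weight st N * d) else 0)" for c
      using True by (auto simp: state_coeff_def N_def[symmetric] b_def[symmetric])
    ultimately show ?thesis
      using finite_Bset by simp
  qed
  ultimately show ?thesis
    by simp
next
  case False
  then have "Poly_Mapping.single (state_exp st) d \<in> J"
    by (intro nonhalting_orbit_in_J[OF B]) (auto simp: halts_def)
  moreover have "state_coeff c st = 0" for c
    using False by (simp add: state_coeff_def)
  ultimately show ?thesis
    by simp
qed

lemma monomial_normal_form:
  assumes "u \<in> Mset m a"
  shows "Poly_Mapping.single u d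
    - (\<Sum>c\<in>Bset m a. Poly_Mapping.single c (d * monomial_nf_coeff c u)) \<in> J"
proof -
  let ?st = "(depth u, bpart u)"
  have "Poly_Mapping.single u d - Poly_Mapping.single (state_exp ?st) (lam ^ depth u * d) \<in> J"
    using reduce_depth[OF Mset_zero assms, of d] by (simp add: state_exp_def)
  moreover have "Poly_Mapping.single (state_exp ?st) (lam ^ depth u * d)
      - (\<Sum>c\<in>Bset m a. Poly_Mapping.single c (state_coeff c ?st * (lam ^ depth u * d))) \<in> J"
    using assms by (intro state_normal_form) (simp add: bpart_in_Bset Mset_imp_VZ)
  ultimately have "Poly_Mapping.single u d
      - (\<Sum>c\<in>Bset m a. Poly_Mapping.single c (state_coeff c ?st * (lam ^ depth u * d))) \<in> J"
    by (rule J_diff_trans)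
  moreover have "state_coeff c ?st * (lam ^ depth u * d) = d * monomial_nf_coeff c u" for c
    by (simp add: monomial_nf_coeff_def)
  ultimately show ?thesis
    by simp
qed

definition nf_coeff :: "int ^ 'n \<Rightarrow> 'n laurent \<Rightarrow> ratfun" where
  "nf_coeff c p = (\<Sum>u\<in>Poly_Mapping.keys p. Poly_Mapping.lookup p u * monomial_nf_coeff c u)"

lemma nf_coeff_eq_sum:
  "finite K \<Longrightarrow> Poly_Mapping.keys p \<subseteq> K \<Longrightarrow>
    nf_coeff c p = (\<Sum>u\<in>K. Poly_Mapping.lookup p u * monomial_nf_coeff c u)"
  unfolding nf_coeff_def by (rule sum.mono_neutral_left) (auto simp: in_keys_iff)

lemma nf_coeff_add: "nf_coeff c (p + q) = nf_coeff c p + nf_coeff c q"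
proof -
  let ?K = "Poly_Mapping.keys p \<union> Poly_Mapping.keys q"
  have "Poly_Mapping.keys (p + q) \<subseteq> ?K"
    by (rule keys_add)
  then show ?thesis
    by (simp add: nf_coeff_eq_sum[of ?K] lookup_add distrib_right sum.distrib)
qed

lemma nf_coeff_diff: "nf_coeff c (p - q) = nf_coeff c p - nf_coeff c q"
proof -
  have "nf_coeff c (- q) = - nf_coeff c q"
    by (simp add: nf_coeff_def sum_negf)
  then show ?thesis
    using nf_coeff_add[of c p "- q"] by simp
qed

lemma nf_coeff_sum: "nf_coeff c (sum f S) = (\<Sum>x\<in>S. nf_coeff c (f x))"
proof -
  have "nf_coeff c 0 = 0"
    by (simp add: nf_coeff_def)
  then show ?thesis
    by (induction S rule: infinite_finite_induct) (simp_all add: nf_coeff_add)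
qed

lemma nf_coeff_single: "nf_coeff c (Poly_Mapping.single u d) = d * monomial_nf_coeff c u"
  by (simp add: nf_coeff_def)

lemma nf_coeff_J:
  assumes "p \<in> J" shows "nf_coeff c p = 0"
proof -
  obtain g where p: "p = (\<Sum>i\<in>UNIV. euler_op i (f_lambda m a a0 l) * g i)"
    and g: "\<And>i. Poly_Mapping.keys (g i) \<subseteq> Mset m a"
    using assms unfolding Jideal_def Sprime_def by auto
  have vanish: "nf_coeff c (rel_binomial k v e) = 0" if "k \<in> {1..m}" "v \<in> Mset m a" for k v e
    using monomial_nf_coeff_add_a[OF that(2,1)]
    by (simp add: rel_binomial_def nf_coeff_diff nf_coeff_single add.commute mult_ac)
  have "nf_coeff c (euler_op i (f_lambda m a a0 l) * g i) = 0" for i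
  proof -
    have "euler_op i (f_lambda m a a0 l) * g i = (\<Sum>v\<in>Poly_Mapping.keys (g i). \<Sum>k\<in>{1..m}.
        rel_binomial k v (of_nat (l k) * of_int (a k $ i) * Poly_Mapping.lookup (g i) v))"
      by (subst mult_eq_sum_single[of "euler_op i (f_lambda m a a0 l)" "g i"])
         (simp add: euler_op_f_lambda sum_distrib_right rel_binomial_mult_single)
    then show ?thesis
      using g vanish by (simp add: nf_coeff_sum subset_iff)
  qed
  then show ?thesis
    by (simp add: p nf_coeff_sum)
qed

lemma Sprime_normal_form:
  assumes "p \<in> Sprime m a"
  shows "p - (\<Sum>c\<in>Bset m a. Poly_Mapping.single c (nf_coeff c p)) \<in> J"
proof -
  have "(\<Sum>c\<in>Bset m a. Poly_Mapping.single c (nf_coeff c p))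
      = (\<Sum>u\<in>Poly_Mapping.keys p. \<Sum>c\<in>Bset m a.
          Poly_Mapping.single c (Poly_Mapping.lookup p u * monomial_nf_coeff c u))"
    unfolding nf_coeff_def single_sum by (rule sum.swap)
  then have "p - (\<Sum>c\<in>Bset m a. Poly_Mapping.single c (nf_coeff c p))
      = (\<Sum>u\<in>Poly_Mapping.keys p. Poly_Mapping.single u (Poly_Mapping.lookup p u)
          - (\<Sum>c\<in>Bset m a. Poly_Mapping.single c (Poly_Mapping.lookup p u * monomial_nf_coeff c u)))"
    by (simp add: sum_subtractf flip: poly_mapping_eq_sum_single)
  also have "\<dots> \<in> J"
    using assms by (intro J_sum monomial_normal_form) (auto simp: Sprime_def)
  finally show ?thesis .
qed

lemma Bset_independent_mod_J:
  assumes "finite F" "F \<subseteq> Bset m a" "(\<Sum>b\<in>F. Poly_Mapping.single b (c b)) \<in> J" "b \<in> F"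
  shows "c b = 0"
proof -
  have "0 = nf_coeff b (\<Sum>b'\<in>F. Poly_Mapping.single b' (c b'))"
    using nf_coeff_J[OF assms(3)] by simp
  also have "\<dots> = (\<Sum>b'\<in>F. c b' * monomial_nf_coeff b b')"
    by (simp add: nf_coeff_sum nf_coeff_single)
  also have "\<dots> = (\<Sum>b'\<in>F. if b' = b then c b' else 0)"
    using assms(2) by (intro sum.cong) (auto simp: monomial_nf_coeff_Bset)
  also have "\<dots> = c b"
    using assms(1,4) by simp
  finally show ?thesis ..
qed

end

theorem proposition5p5:
  fixes m :: nat and a :: "nat \<Rightarrow> int ^ 'n::finite" and a0 :: "int ^ 'n" and l :: "nat \<Rightarrow> nat"
  assumes inj: "inj_on a {1..m}"
    and indep: "independent (rv ` a ` {1..m})"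
    and lpos: "\<forall>j\<in>{0..m}. 0 < l j"
    and lgcd: "Gcd (l ` {0..m}) = 1"
    and rel: "of_nat (l 0) *s a0 = (\<Sum>j\<in>{1..m}. of_nat (l j) *s a j)"
    and l0: "l 0 = (\<Sum>j\<in>{1..m}. l j)"
  shows
    "(\<forall>p\<in>Sprime m a. \<exists>F c. finite F \<and> F \<subseteq> Bset m a \<and>
        p - (\<Sum>b\<in>F. Poly_Mapping.single b (c b)) \<in> Jideal (f_lambda m a a0 l) (Sprime m a))
     \<and> (\<forall>F c. finite F \<and> F \<subseteq> Bset m a \<and>
        (\<Sum>b\<in>F. Poly_Mapping.single b (c b)) \<in> Jideal (f_lambda m a a0 l) (Sprime m a)
        \<longrightarrow> (\<forall>b\<in>F. c b = (0::ratfun)))"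
proof -
  interpret barycentric_circuit m a a0 l
    using inj indep lpos rel l0 by unfold_locales
  show ?thesis
  proof (intro conjI ballI allI impI)
    fix p assume "p \<in> Sprime m a"
    then show "\<exists>F c. finite F \<and> F \<subseteq> Bset m a \<and>
        p - (\<Sum>b\<in>F. Poly_Mapping.single b (c b)) \<in> Jideal (f_lambda m a a0 l) (Sprime m a)"
      by (intro exI[of _ "Bset m a"] exI[of _ "\<lambda>c. nf_coeff c p"]) (simp add: finite_Bset Sprime_normal_form)
  next
    fix F c b
    assume "finite F \<and> F \<subseteq> Bset m a \<and>
        (\<Sum>b\<in>F. Poly_Mapping.single b (c b)) \<in> Jideal (f_lambda m a a0 l) (Sprime m a)" and "b \<in> F"
    then show "c b = 0"
      using Bset_independent_mod_J by blast
  qed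
qed

end
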